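(* Let $d\ge1$ and let $S$ be a compact convex subset of a $d$-dimensional affine subspace of a Euclidean space, with nonempty relative interior, and let $\mathrm{vol}(S)$ denote its $d$-dimensional Lebesgue measure. Let $F:S\to[a,b]$ ($a<b$) be concave, and let $\eta>0$ satisfy $\eta(b-a)\ge d$. Then $$\sup_{\mathbf x\in S}F(\mathbf x)\le \frac1\eta\ln\left[\frac{\int_S e^{\eta F(\mathbf x)}\,d\mathbf x}{\mathrm{vol}(S)}\right]+\frac d\eta\ln\left(\frac{\eta e(b-a)}{d}\right).$$
   Context: The integral is with respect to $d$-dimensional Lebesgue measure on the affine hull of $S$. *)

theory Defs
  imports "HOL-Analysis.Analysis"
begin

text \<open>The d-dimensional Lebesgue measure on A is the pushforward of
  Lebesgue measure on 'b along g (independent of the choice of g).\<close>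
definition affine_isometric_param :: "('b::euclidean_space \<Rightarrow> 'a::euclidean_space) \<Rightarrow> 'a set \<Rightarrow> bool" where
  "affine_isometric_param g A \<longleftrightarrow>
     (\<exists>p L. linear L \<and> (\<forall>x. norm (L x) = norm x) \<and> (\<forall>y. g y = p + L y)) \<and> range g = A"

end

theory Submission
  imports Defs
begin

(* Pull everything back along the isometric parametrization g: the set
   T = g -` S is a compact convex body in the parameter space (nonempty interior) and
   G = F o g is concave on T with values in [a,b]. Fix x0 in T and a ratio 0 < s <= 1.
   The homothetic copy T_s = x0 + s (T - x0) lies in T, has volume s^d vol(T), and by
   concavity G >= G x0 - s (b - a) on it. Hence
       exp (eta (G x0 - s (b - a))) s^d vol(T) <= integral over T of exp (eta G).
   Choosing s = d / (eta (b - a)), which is admissible exactly because eta (b - a) >= d,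
   and taking logarithms yields the bound for G x0, i.e. for F at every point of S;
   the supremum follows.
   The file first collects facts about isometric parametrizations and pull-backs, then
   measurability and integrability of exp (eta G), then the homothety estimate, the
   logarithmic rearrangement, the pointwise bound, and finally the theorem. *)

lemma affine_isometric_paramE:
  assumes "affine_isometric_param g A"
  obtains p L where "bounded_linear L" "\<And>x. norm (L x) = norm x" "g = (\<lambda>y. p + L y)"
    and "range g = A"
  using assms linear_conv_bounded_linear
  unfolding affine_isometric_param_def by blast

lemma affine_isometric_param_affine_comb:
  assumes "affine_isometric_param g A" and "u + v = 1"
  shows "g (u *\<^sub>R x + v *\<^sub>R y) = u *\<^sub>R g x + v *\<^sub>R g y"
proof -
  obtain p L where L: "bounded_linear L" "g = (\<lambda>y. p + L y)"
    using assms(1) by (rule affine_isometric_paramE) blast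
  interpret bounded_linear L by (fact L(1))
  have "g (u *\<^sub>R x + v *\<^sub>R y) = p + (u *\<^sub>R L x + v *\<^sub>R L y)"
    using L(2) by (simp add: add scale)
  also have "\<dots> = (u + v) *\<^sub>R p + (u *\<^sub>R L x + v *\<^sub>R L y)"
    using assms(2) by simp
  also have "\<dots> = u *\<^sub>R g x + v *\<^sub>R g y"
    using L(2) by (simp add: algebra_simps)
  finally show ?thesis .
qed

lemma affine_isometric_param_continuous:
  assumes "affine_isometric_param g A"
  shows "continuous_on UNIV g"
proof -
  obtain p L where "bounded_linear L" "g = (\<lambda>y. p + L y)"
    using assms by (rule affine_isometric_paramE)
  then have "continuous_on UNIV L" "g = (\<lambda>y. p + L y)"
    by (simp_all add: linear_continuous_on)
  then show ?thesis
    by (simp add: continuous_on_add continuous_on_const)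
qed

lemma compact_affine_isometric_param_vimage:
  assumes "affine_isometric_param g A" and "compact S"
  shows "compact (g -` S)"
proof -
  obtain p L where L: "bounded_linear L" "\<And>x. norm (L x) = norm x" "g = (\<lambda>y. p + L y)"
    using assms(1) by (rule affine_isometric_paramE) blast
  obtain B where B: "\<forall>x\<in>S. norm x \<le> B"
    using compact_imp_bounded[OF assms(2)] bounded_iff by blast
  have "norm y \<le> B + norm p" if "y \<in> g -` S" for y
  proof -
    have "norm y = norm (g y - p)"
      using L by simp
    also have "\<dots> \<le> norm (g y) + norm p"
      by (rule norm_triangle_ineq4)
    finally show ?thesis
      using B that by force
  qed
  then have "bounded (g -` S)"
    unfolding bounded_iff by blast
  moreover have "closed (g -` S)"
    using affine_isometric_param_continuous[OF assms(1)] compact_imp_closed[OF assms(2)]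
    by (simp add: closed_vimage)
  ultimately show ?thesis
    by (simp add: compact_eq_bounded_closed)
qed

lemma convex_affine_isometric_param_vimage:
  assumes "affine_isometric_param g A" and "convex S"
  shows "convex (g -` S)"
  using assms affine_isometric_param_affine_comb[OF assms(1)]
  unfolding convex_def by simp

lemma interior_affine_isometric_param_vimage:
  assumes "affine_isometric_param g A" and "S \<subseteq> A"
    and "openin (top_of_set A) U" "U \<noteq> {}" "U \<subseteq> S"
  shows "interior (g -` S) \<noteq> {}"
proof -
  have rg: "range g = A"
    using assms(1) unfolding affine_isometric_param_def by blast
  obtain V where V: "open V" "U = A \<inter> V"
    using assms(3) openin_open by blast
  have "g -` U = g -` V"
    using V(2) rg by auto
  then have "open (g -` U)"
    using affine_isometric_param_continuous[OF assms(1)] V(1) by (simp add: open_vimage)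
  moreover have "g -` U \<noteq> {}" "g -` U \<subseteq> g -` S"
    using assms(2,4,5) rg by auto
  ultimately show ?thesis
    using interior_maximal by blast
qed

lemma concave_on_affine_isometric_param_compose:
  assumes "affine_isometric_param g A" and "concave_on S F"
  shows "concave_on (g -` S) (\<lambda>y. F (g y))"
  using assms(2) convex_affine_isometric_param_vimage[OF assms(1)]
    affine_isometric_param_affine_comb[OF assms(1)]
  unfolding concave_on_iff by simp

text \<open>The boundary of a convex set is negligible, so continuity on the interior already
  gives measurability on the whole set.\<close>

lemma continuous_on_interior_imp_measurable_on:
  fixes f :: "'a::euclidean_space \<Rightarrow> real"
  assumes "convex T" and "continuous_on (interior T) f"
  shows "f measurable_on T"
proof -
  have "f \<in> borel_measurable (lebesgue_on (interior T))"
    using assms(2) by (simp add: continuous_imp_measurable_on_sets_lebesgue)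
  then have "f measurable_on interior T"
    by (simp add: measurable_on_iff_borel_measurable)
  moreover have "T - interior T \<subseteq> frontier T"
    using closure_subset unfolding frontier_def by blast
  then have "negligible ((interior T - T) \<union> (T - interior T))"
    using negligible_subset[OF negligible_convex_frontier[OF assms(1)]] interior_subset
    by (metis Diff_eq_empty_iff sup_bot.left_neutral)
  ultimately show ?thesis
    by (rule measurable_on_spike_set)
qed

lemma concave_on_continuous_on_interior:
  fixes G :: "'a::euclidean_space \<Rightarrow> real"
  assumes "concave_on T G"
  shows "continuous_on (interior T) G"
proof -
  have neg: "convex_on T (\<lambda>x. - G x)"
    using assms by (simp add: concave_on_def)
  then have "convex_on (interior T) (\<lambda>x. - G x)"
    by (intro convex_on_subset[OF neg interior_subset] convex_interior convex_on_imp_convex)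
  then have "continuous_on (interior T) (\<lambda>x. - (- G x))"
    by (intro continuous_on_minus convex_on_continuous open_interior)
  then show ?thesis
    by simp
qed

lemma exp_concave_integrable_on:
  fixes G :: "'a::euclidean_space \<Rightarrow> real"
  assumes "bounded T" "convex T" and "concave_on T G" and "\<And>y. y \<in> T \<Longrightarrow> G y \<le> b"
    and "E \<subseteq> T" "E \<in> sets lebesgue" and "\<eta> \<ge> 0"
  shows "(\<lambda>y. exp (\<eta> * G y)) integrable_on E"
proof -
  let ?h = "\<lambda>y. exp (\<eta> * G y)"
  have "continuous_on (interior T) ?h"
    using concave_on_continuous_on_interior[OF assms(3)] by (intro continuous_intros)
  then have "?h measurable_on T"
    by (rule continuous_on_interior_imp_measurable_on[OF assms(2)])
  moreover have "T \<in> sets lebesgue"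
    using measurable_convex[OF assms(2,1)] by blast
  ultimately have "?h \<in> borel_measurable (lebesgue_on T)"
    by (simp add: measurable_on_iff_borel_measurable)
  then have measurable: "?h \<in> borel_measurable (lebesgue_on E)"
    using assms(5) by (rule measurable_restrict_mono)
  have "E \<in> lmeasurable"
    using bounded_subset[OF assms(1,5)] assms(6) by (rule bounded_set_imp_lmeasurable)
  then have "(\<lambda>y. exp (\<eta> * b)) integrable_on E"
    by (rule integrable_on_const)
  then show ?thesis
  proof (rule measurable_bounded_by_integrable_imp_integrable[OF measurable _ _ assms(6)])
    fix y assume "y \<in> E"
    then have "\<eta> * G y \<le> \<eta> * b"
      using assms(4,5,7) by (auto intro: mult_left_mono)
    then show "norm (?h y) \<le> exp (\<eta> * b)"
      by simp
  qed
qed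

lemma measure_pos_convex_body:
  fixes T :: "'a::euclidean_space set"
  assumes "bounded T" "convex T" "interior T \<noteq> {}"
  shows "measure lebesgue T > 0"
  using assms measurable_convex negligible_convex_interior negligible_iff_measure0
  by (metis measure_nonneg order_less_le)

section \<open>The homothety estimate\<close>

definition homothety_image :: "real \<Rightarrow> 'a::real_vector \<Rightarrow> 'a set \<Rightarrow> 'a set" where
  "homothety_image s x0 T = (\<lambda>z. s *\<^sub>R z + (1 - s) *\<^sub>R x0) ` T"

lemma homothety_image_subset:
  assumes "convex T" "x0 \<in> T" "0 \<le> s" "s \<le> 1"
  shows "homothety_image s x0 T \<subseteq> T"
  using assms unfolding homothety_image_def convex_def by auto

lemma measure_homothety_image:
  fixes T :: "'a::euclidean_space set"
  assumes "s > 0"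
  shows "measure lebesgue (homothety_image s x0 T) = s ^ DIM('a) * measure lebesgue T"
  using measure_lebesgue_affine[of s "(1 - s) *\<^sub>R x0" T] assms
  unfolding homothety_image_def by simp

lemma concave_on_homothety_lower_bound:
  assumes "concave_on T G" "\<And>y. y \<in> T \<Longrightarrow> G y \<in> {a..b}" "x0 \<in> T" "0 \<le> s" "s \<le> 1"
    and "y \<in> homothety_image s x0 T"
  shows "G x0 - s * (b - a) \<le> G y"
proof -
  obtain z where z: "z \<in> T" "y = s *\<^sub>R z + (1 - s) *\<^sub>R x0"
    using assms(6) unfolding homothety_image_def by auto
  have "(1 - s) * G x0 + s * G z \<le> G y"
    using concave_onD[OF assms(1), of s x0 z] assms(3-5) z by (simp add: add.commute)
  moreover have "s * a \<le> s * G z" "s * G x0 \<le> s * b"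
    using assms(2)[of z] assms(2)[of x0] assms(3,4) z(1) by (auto intro: mult_left_mono)
  ultimately show ?thesis
    by (simp add: algebra_simps)
qed

text \<open>The key estimate: the integral of exp (eta G) over T is at least its integral over the
  homothetic copy, where the integrand is bounded below by a constant.\<close>

lemma exp_concave_integral_lower_bound:
  fixes T :: "'a::euclidean_space set" and G :: "'a \<Rightarrow> real"
  assumes "compact T" "convex T" and "concave_on T G" and "\<And>y. y \<in> T \<Longrightarrow> G y \<in> {a..b}"
    and "x0 \<in> T" "0 < s" "s \<le> 1" "\<eta> \<ge> 0"
  shows "exp (\<eta> * (G x0 - s * (b - a))) * s ^ DIM('a) * measure lebesgue T
           \<le> integral T (\<lambda>y. exp (\<eta> * G y))"
proof -
  let ?h = "\<lambda>y. exp (\<eta> * G y)" and ?c = "exp (\<eta> * (G x0 - s * (b - a)))"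
  define Ts where "Ts = homothety_image s x0 T"
  have TsT: "Ts \<subseteq> T"
    unfolding Ts_def using assms(2,5-7) by (intro homothety_image_subset) auto
  have LTs: "Ts \<in> lmeasurable"
    unfolding Ts_def homothety_image_def
    by (intro lmeasurable_compact compact_continuous_image assms(1) continuous_intros)
  have bounds: "\<And>y. y \<in> T \<Longrightarrow> G y \<le> b"
    using assms(4) by auto
  have int: "?h integrable_on E" if "E \<subseteq> T" "E \<in> lmeasurable" for E
    using exp_concave_integrable_on[OF compact_imp_bounded[OF assms(1)] assms(2,3) bounds]
      that assms(8) by blast
  have "?c * s ^ DIM('a) * measure lebesgue T = ?c * measure lebesgue Ts"
    by (simp add: Ts_def measure_homothety_image[OF assms(6)] mult.assoc)
  also have "\<dots> = integral Ts (\<lambda>y. ?c)"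
    using lmeasure_integral[OF LTs] by (simp add: integral_mult_right[symmetric])
  also have "\<dots> \<le> integral Ts ?h"
  proof (rule integral_le)
    fix y assume "y \<in> Ts"
    then show "?c \<le> ?h y"
      using concave_on_homothety_lower_bound[OF assms(3,4,5)] assms(6-8)
      unfolding Ts_def by (simp add: mult_left_mono)
  qed (use LTs TsT int in \<open>auto intro: integrable_on_const\<close>)
  also have "\<dots> \<le> integral T ?h"
    using TsT LTs int lmeasurable_compact[OF assms(1)] by (intro integral_subset_le) auto
  finally show ?thesis .
qed

text \<open>Taking logarithms in the estimate at the optimal ratio s = n / (eta c).\<close>

lemma ln_rearrange_optimal_ratio:
  fixes n :: nat
  assumes "\<eta> > 0" "c > 0" "n > 0"
    and "exp (\<eta> * (y - real n / (\<eta> * c) * c)) * (real n / (\<eta> * c)) ^ n \<le> Q"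
  shows "y \<le> 1 / \<eta> * ln Q + real n / \<eta> * ln (\<eta> * exp 1 * c / real n)"
proof -
  define s where "s = real n / (\<eta> * c)"
  have s0: "s > 0"
    unfolding s_def using assms(1-3) by simp
  let ?P = "exp (\<eta> * (y - s * c)) * s ^ n"
  have "\<eta> * (y - s * c) = \<eta> * y - real n"
    unfolding s_def using assms(1,2) by (simp add: algebra_simps)
  then have ln_P: "ln ?P = \<eta> * y - real n + real n * ln s"
    using s0 by (simp add: ln_mult ln_realpow)
  have "0 < ?P"
    using s0 by simp
  then have ln_le: "ln ?P \<le> ln Q"
    by (rule ln_mono[OF assms(4)[folded s_def]])
  have "\<eta> * exp 1 * c / real n = exp 1 / s"
    unfolding s_def using assms by simp
  then have "real n * ln (\<eta> * exp 1 * c / real n) = real n - real n * ln s"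
    using s0 by (simp add: ln_div right_diff_distrib)
  then have "\<eta> * y \<le> ln Q + real n * ln (\<eta> * exp 1 * c / real n)"
    using ln_P ln_le by linarith
  then show ?thesis
    using assms(1) by (simp add: field_simps)
qed

lemma concave_pointwise_log_integral_bound:
  fixes T :: "'b::euclidean_space set" and G :: "'b \<Rightarrow> real"
  assumes "compact T" "convex T" "interior T \<noteq> {}"
    and "concave_on T G" and "\<And>y. y \<in> T \<Longrightarrow> G y \<in> {a..b}"
    and "a < b" "\<eta> > 0" "\<eta> * (b - a) \<ge> real DIM('b)" and "x0 \<in> T"
  shows "G x0 \<le> 1 / \<eta> * ln (integral T (\<lambda>y. exp (\<eta> * G y)) / measure lebesgue T)
           + real DIM('b) / \<eta> * ln (\<eta> * exp 1 * (b - a) / real DIM('b))"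
proof (rule ln_rearrange_optimal_ratio)
  let ?s = "real DIM('b) / (\<eta> * (b - a))"
  have "0 < ?s" "?s \<le> 1"
    using assms(6-8) by auto
  then have "exp (\<eta> * (G x0 - ?s * (b - a))) * ?s ^ DIM('b) * measure lebesgue T
               \<le> integral T (\<lambda>y. exp (\<eta> * G y))"
    using assms(7) by (intro exp_concave_integral_lower_bound[OF assms(1,2,4,5,9)]) auto
  moreover have "measure lebesgue T > 0"
    using assms(1-3) by (intro measure_pos_convex_body compact_imp_bounded)
  ultimately show "exp (\<eta> * (G x0 - ?s * (b - a))) * ?s ^ DIM('b)
                     \<le> integral T (\<lambda>y. exp (\<eta> * G y)) / measure lebesgue T"
    by (simp add: pos_le_divide_eq)
qed (use assms in auto)

theorem lemma2:
  fixes S A :: "'a::euclidean_space set"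
    and g :: "'b::euclidean_space \<Rightarrow> 'a"
    and F :: "'a \<Rightarrow> real"
    and a b \<eta> :: real
  assumes "affine A" and "aff_dim A = int DIM('b)" and "S \<subseteq> A"
    and "compact S" and "convex S"
    and "\<exists>U. openin (top_of_set A) U \<and> U \<noteq> {} \<and> U \<subseteq> S"
    and "affine_isometric_param g A"
    and "a < b" and "\<forall>x\<in>S. F x \<in> {a..b}" and "concave_on S F"
    and "\<eta> > 0" and "\<eta> * (b - a) \<ge> real DIM('b)"
  shows "(SUP x\<in>S. F x) \<le>
           1 / \<eta> * ln (integral (g -` S) (\<lambda>y. exp (\<eta> * F (g y))) / measure lebesgue (g -` S))
           + real DIM('b) / \<eta> * ln (\<eta> * exp 1 * (b - a) / real DIM('b))"
proof -
  let ?bound = "1 / \<eta> * ln (integral (g -` S) (\<lambda>y. exp (\<eta> * F (g y))) / measure lebesgue (g -` S))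
                + real DIM('b) / \<eta> * ln (\<eta> * exp 1 * (b - a) / real DIM('b))"
  obtain U where U: "openin (top_of_set A) U" "U \<noteq> {}" "U \<subseteq> S"
    using assms(6) by blast
  have rg: "range g = A"
    using assms(7) unfolding affine_isometric_param_def by blast
  have pointwise: "F (g y) \<le> ?bound" if "y \<in> g -` S" for y
    using assms(8-12) that
    by (intro concave_pointwise_log_integral_bound
        compact_affine_isometric_param_vimage[OF assms(7,4)]
        convex_affine_isometric_param_vimage[OF assms(7,5)]
        interior_affine_isometric_param_vimage[OF assms(7,3) U]
        concave_on_affine_isometric_param_compose[OF assms(7,10)]) auto
  show ?thesis
  proof (rule cSUP_least)
    show "S \<noteq> {}"
      using U by blast
  next
    fix x assume "x \<in> S"
    then obtain y where "x = g y" "y \<in> g -` S"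
      using assms(3) rg by blast
    then show "F x \<le> ?bound"
      using pointwise by blast
  qed
qed

end
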